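(* Let $U$ be a proper graded submodule of $M$. Then $U$ is a graded weakly $J_{gr}$-semiprime submodule of $M$ if and only if for every graded submodule $K$ of $M$, every $r_g\in h(R)$ and every $n\in\mathbb{Z}^+$ with $\{0\}\neq\langle r_g\rangle^nK\subseteq U$, we have $\langle r_g\rangle K\subseteq U+J_{gr}(M)$.
   Context: Standing conventions: $\Gamma$ is a group, $R=\bigoplus_{g\in\Gamma}R_g$ is a commutative $\Gamma$-graded ring with identity, and $M=\bigoplus_{g\in\Gamma}M_g$ is a unitary $\Gamma$-graded $R$-module. $h(R)=\bigcup_gR_g$, $h(M)=\bigcup_gM_g$ are the homogeneous elements; $r_g$, $m_h$ denote homogeneous elements. A submodule $U$ is graded if $U=\bigoplus_g(U\cap M_g)$. A graded submodule $U\neq M$ is Gr-maximal if every graded submodule $L$ with $U\subseteq L\subseteq M$ equals $U$ or $M$. $J_{gr}(M)$ is the intersection of all Gr-maximal submodules of $M$ ($=M$ if there are none). A proper graded submodule $U$ of $M$ is graded weakly $J_{gr}$-semiprime if whenever $r_g\in h(R)$, $m_h\in h(M)$, $n\in\mathbb{Z}^+$ and $0\neq r_g^nm_h\in U$, then $r_gm_h\in U+J_{gr}(M)$. $\langle a\rangle$ is the ideal generated by $a$. *)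

theory Defs
  imports Complex_Main
begin

text \<open>Grading group \<Gamma> is a type 'g of class group_add (written additively, not
necessarily commutative; the neutral element 0 plays the role of e).\<close>

definition add_subgroup :: "'a::ab_group_add set \<Rightarrow> bool" where
  "add_subgroup A \<longleftrightarrow> 0 \<in> A \<and> (\<forall>x\<in>A. \<forall>y\<in>A. x + y \<in> A) \<and> (\<forall>x\<in>A. - x \<in> A)"

definition is_direct_sum :: "'a::ab_group_add set \<Rightarrow> ('g \<Rightarrow> 'a set) \<Rightarrow> bool" where
  "is_direct_sum X A \<longleftrightarrow>
     (\<forall>x\<in>X. \<exists>!f. finite {g. f g \<noteq> 0} \<and> (\<forall>g. f g \<in> A g) \<and> x = (\<Sum>g | f g \<noteq> 0. f g))"

definition graded_ring :: "('g::group_add \<Rightarrow> 'r::comm_ring_1 set) \<Rightarrow> bool" where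
  "graded_ring RG \<longleftrightarrow>
     (\<forall>g. add_subgroup (RG g)) \<and> is_direct_sum UNIV RG \<and>
     (\<forall>g h. \<forall>a\<in>RG g. \<forall>b\<in>RG h. a * b \<in> RG (g + h))"

definition graded_module ::
  "('g::group_add \<Rightarrow> 'r::comm_ring_1 set) \<Rightarrow> ('g \<Rightarrow> 'm::ab_group_add set) \<Rightarrow> ('r \<Rightarrow> 'm \<Rightarrow> 'm) \<Rightarrow> bool" where
  "graded_module RG MG scale \<longleftrightarrow>
     module scale \<and> graded_ring RG \<and>
     (\<forall>g. add_subgroup (MG g)) \<and> is_direct_sum UNIV MG \<and>
     (\<forall>g h. \<forall>a\<in>RG g. \<forall>m\<in>MG h. scale a m \<in> MG (g + h))"

definition homog :: "('g \<Rightarrow> 'a set) \<Rightarrow> 'a set" where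
  "homog A = (\<Union>g. A g)"

definition graded_submodule ::
  "('g \<Rightarrow> 'm::ab_group_add set) \<Rightarrow> ('r::comm_ring_1 \<Rightarrow> 'm \<Rightarrow> 'm) \<Rightarrow> 'm set \<Rightarrow> bool" where
  "graded_submodule MG scale U \<longleftrightarrow>
     module.subspace scale U \<and> is_direct_sum U (\<lambda>g. U \<inter> MG g)"

definition gr_maximal ::
  "('g \<Rightarrow> 'm::ab_group_add set) \<Rightarrow> ('r::comm_ring_1 \<Rightarrow> 'm \<Rightarrow> 'm) \<Rightarrow> 'm set \<Rightarrow> bool" where
  "gr_maximal MG scale U \<longleftrightarrow>
     graded_submodule MG scale U \<and> U \<noteq> UNIV \<and>
     (\<forall>L. graded_submodule MG scale L \<and> U \<subseteq> L \<longrightarrow> L = U \<or> L = UNIV)"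

text \<open>J_gr(M): intersection of all Gr-maximal submodules (UNIV if there are none).\<close>
definition Jgr ::
  "('g \<Rightarrow> 'm::ab_group_add set) \<Rightarrow> ('r::comm_ring_1 \<Rightarrow> 'm \<Rightarrow> 'm) \<Rightarrow> 'm set" where
  "Jgr MG scale = \<Inter> {U. gr_maximal MG scale U}"

definition set_plus :: "'m::ab_group_add set \<Rightarrow> 'm set \<Rightarrow> 'm set" where
  "set_plus U V = {u + v | u v. u \<in> U \<and> v \<in> V}"

definition graded_weakly_Jgr_semiprime ::
  "('g \<Rightarrow> 'r::comm_ring_1 set) \<Rightarrow> ('g \<Rightarrow> 'm::ab_group_add set) \<Rightarrow> ('r \<Rightarrow> 'm \<Rightarrow> 'm) \<Rightarrow> 'm set \<Rightarrow> bool" where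
  "graded_weakly_Jgr_semiprime RG MG scale U \<longleftrightarrow>
     graded_submodule MG scale U \<and> U \<noteq> UNIV \<and>
     (\<forall>r\<in>homog RG. \<forall>m\<in>homog MG. \<forall>n::nat. n > 0 \<longrightarrow>
        scale (r ^ n) m \<noteq> 0 \<longrightarrow> scale (r ^ n) m \<in> U \<longrightarrow>
        scale r m \<in> set_plus U (Jgr MG scale))"

definition pideal :: "'r::comm_ring_1 \<Rightarrow> 'r set" where
  "pideal a = {r * a | r. True}"

definition ideal_prod :: "'r::comm_ring_1 set \<Rightarrow> 'r set \<Rightarrow> 'r set" where
  "ideal_prod I J = module.span ((*) :: 'r \<Rightarrow> 'r \<Rightarrow> 'r) {i * j | i j. i \<in> I \<and> j \<in> J}"

fun ideal_pow :: "'r::comm_ring_1 set \<Rightarrow> nat \<Rightarrow> 'r set" where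
  "ideal_pow I 0 = UNIV"
| "ideal_pow I (Suc n) = ideal_prod I (ideal_pow I n)"

definition ideal_smult ::
  "('r::comm_ring_1 \<Rightarrow> 'm::ab_group_add \<Rightarrow> 'm) \<Rightarrow> 'r set \<Rightarrow> 'm set \<Rightarrow> 'm set" where
  "ideal_smult scale I K = module.span scale {scale i k | i k. i \<in> I \<and> k \<in> K}"

end

theory Submission
  imports Defs
begin

text \<open>Since \<langle>r\<rangle>^n K = r^n K for a submodule K, the condition on graded submodules reduces to
  the elementwise one by decomposing K into homogeneous components (one direction) and by taking
  K = R m for homogeneous m (the other). The only subtlety is a component m with r^n m = 0, which
  the elementwise condition does not cover: for such m one shows r m \<in> J_gr(M) by a graded
  Nakayama argument.\<close>

lemma module_mult: "module ((*) :: 'r::comm_ring_1 \<Rightarrow> 'r \<Rightarrow> 'r)"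
  by unfold_locales (auto simp: algebra_simps)

lemma pideal_self: "a \<in> pideal a"
  unfolding pideal_def by (metis (mono_tags) mult_1 mem_Collect_eq)

lemma subspace_pideal: "module.subspace (*) (pideal (a::'r::comm_ring_1))"
proof -
  interpret module "(*) :: 'r \<Rightarrow> 'r \<Rightarrow> 'r" by (rule module_mult)
  have "pideal a = span {a}" unfolding span_singleton pideal_def by auto
  then show ?thesis by simp
qed

lemma ideal_smult_pideal:
  assumes "module scale" and "module.subspace scale K"
  shows "ideal_smult scale (pideal c) K = scale c ` K"
proof -
  interpret module scale by fact
  have "{scale i k | i k. i \<in> pideal c \<and> k \<in> K} = scale c ` K"
  proof (intro equalityI subsetI)
    fix x assume "x \<in> {scale i k | i k. i \<in> pideal c \<and> k \<in> K}"
    then obtain s k where "k \<in> K" "x = scale c (scale s k)"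
      unfolding pideal_def by (auto simp: mult.commute)
    then show "x \<in> scale c ` K" using subspace_scale[OF assms(2)] by blast
  next
    fix x assume "x \<in> scale c ` K"
    then show "x \<in> {scale i k | i k. i \<in> pideal c \<and> k \<in> K}" using pideal_self by blast
  qed
  moreover have "subspace (scale c ` K)"
    by (rule module_hom.subspace_image[OF _ assms(2)])
       (unfold_locales, simp_all add: scale_right_distrib mult.commute)
  ultimately show ?thesis unfolding ideal_smult_def by simp
qed

lemma ideal_pow_pideal: "ideal_pow (pideal (r::'r::comm_ring_1)) n = pideal (r ^ n)"
proof (induction n)
  case 0
  show ?case unfolding pideal_def by (auto intro: exI[of _ "_"])
next
  case (Suc n)
  have "ideal_prod (pideal r) (pideal (r ^ n)) = (*) r ` pideal (r ^ n)"
    using ideal_smult_pideal[OF module_mult subspace_pideal]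
    unfolding ideal_prod_def ideal_smult_def .
  also have "\<dots> = pideal (r ^ Suc n)"
  proof (intro equalityI subsetI)
    fix x assume "x \<in> pideal (r ^ Suc n)"
    then obtain s where "x = r * (s * r ^ n)" unfolding pideal_def by (auto simp: ac_simps)
    then show "x \<in> (*) r ` pideal (r ^ n)" unfolding pideal_def by blast
  qed (auto simp: pideal_def ac_simps)
  finally show ?case using Suc by simp
qed

lemma set_plusI: "u \<in> A \<Longrightarrow> v \<in> B \<Longrightarrow> u + v \<in> set_plus A B"
  unfolding set_plus_def by blast

lemma subset_set_plus_left: "0 \<in> B \<Longrightarrow> A \<subseteq> set_plus A B"
  using set_plusI[of _ A 0 B] by auto

lemma subset_set_plus_right: "0 \<in> A \<Longrightarrow> B \<subseteq> set_plus A B"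
  using set_plusI[of 0 A _ B] by auto

lemma set_plus_eq_span:
  assumes "module scale" "module.subspace scale A" "module.subspace scale B"
  shows "set_plus A B = module.span scale (A \<union> B)"
proof -
  interpret module scale by fact
  have "span A = A" "span B = B" using assms(2,3) by simp_all
  then show ?thesis by (simp only: span_Un set_plus_def)
qed

lemma subspace_set_plus:
  assumes "module scale" "module.subspace scale A" "module.subspace scale B"
  shows "module.subspace scale (set_plus A B)"
  using assms module.subspace_span set_plus_eq_span by metis

lemma sum_nonzero_eq_sum_superset:
  assumes "finite T" "{g. f g \<noteq> 0} \<subseteq> T"
  shows "(\<Sum>g | f g \<noteq> 0. f g) = sum f T"
  by (rule sum.mono_neutral_left) (use assms in auto)

lemma is_direct_sum_subfamily:
  assumes "is_direct_sum UNIV MG" "\<And>g. S g \<subseteq> MG g"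
    and "\<And>x. x \<in> X \<Longrightarrow> \<exists>f. finite {g. f g \<noteq> 0} \<and> (\<forall>g. f g \<in> S g) \<and> x = (\<Sum>g | f g \<noteq> 0. f g)"
  shows "is_direct_sum X S"
  unfolding is_direct_sum_def
proof
  fix x assume "x \<in> X"
  then obtain f where f: "finite {g. f g \<noteq> 0} \<and> (\<forall>g. f g \<in> S g) \<and> x = (\<Sum>g | f g \<noteq> 0. f g)"
    using assms(3) by blast
  have "\<exists>!f. finite {g. f g \<noteq> 0} \<and> (\<forall>g. f g \<in> MG g) \<and> x = (\<Sum>g | f g \<noteq> 0. f g)"
    using assms(1) unfolding is_direct_sum_def by blast
  then show "\<exists>!f. finite {g. f g \<noteq> 0} \<and> (\<forall>g. f g \<in> S g) \<and> x = (\<Sum>g | f g \<noteq> 0. f g)"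
    using f assms(2) by (intro ex1I[of _ f]) blast+
qed

lemma graded_submodule_set_plus:
  assumes gm: "graded_module RG MG scale"
    and A: "graded_submodule MG scale A" and B: "graded_submodule MG scale B"
  shows "graded_submodule MG scale (set_plus A B)"
  unfolding graded_submodule_def
proof
  have ms: "module scale" and du: "is_direct_sum UNIV MG" and sg: "\<And>g. add_subgroup (MG g)"
    using gm unfolding graded_module_def by auto
  show "module.subspace scale (set_plus A B)"
    using subspace_set_plus[OF ms] A B unfolding graded_submodule_def by blast
  show "is_direct_sum (set_plus A B) (\<lambda>g. set_plus A B \<inter> MG g)"
  proof (rule is_direct_sum_subfamily[OF du])
    fix x assume "x \<in> set_plus A B"
    then obtain a b where ab: "a \<in> A" "b \<in> B" "x = a + b" unfolding set_plus_def by auto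
    obtain fa where fa: "finite {g. fa g \<noteq> 0}" "\<forall>g. fa g \<in> A \<inter> MG g" "a = (\<Sum>g | fa g \<noteq> 0. fa g)"
      using A ab(1) unfolding graded_submodule_def is_direct_sum_def by blast
    obtain fb where fb: "finite {g. fb g \<noteq> 0}" "\<forall>g. fb g \<in> B \<inter> MG g" "b = (\<Sum>g | fb g \<noteq> 0. fb g)"
      using B ab(2) unfolding graded_submodule_def is_direct_sum_def by blast
    define T where "T = {g. fa g \<noteq> 0} \<union> {g. fb g \<noteq> 0}"
    have T: "finite T" using fa fb T_def by auto
    have supp: "{g. fa g + fb g \<noteq> 0} \<subseteq> T" unfolding T_def by auto
    show "\<exists>f. finite {g. f g \<noteq> 0} \<and> (\<forall>g. f g \<in> set_plus A B \<inter> MG g) \<and> x = (\<Sum>g | f g \<noteq> 0. f g)"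
    proof (intro exI conjI allI)
      show "finite {g. fa g + fb g \<noteq> 0}" using T supp finite_subset by blast
      show "fa g + fb g \<in> set_plus A B \<inter> MG g" for g
        using fa(2) fb(2) sg[of g] set_plusI[of "fa g" A "fb g" B] unfolding add_subgroup_def by blast
      have "(\<Sum>g | fa g + fb g \<noteq> 0. fa g + fb g) = (\<Sum>g\<in>T. fa g + fb g)"
        by (rule sum_nonzero_eq_sum_superset[OF T supp])
      also have "\<dots> = sum fa T + sum fb T" by (rule sum.distrib)
      also have "\<dots> = a + b"
        using fa(3) fb(3) sum_nonzero_eq_sum_superset[OF T, of fa] sum_nonzero_eq_sum_superset[OF T, of fb]
        unfolding T_def by auto
      finally show "x = (\<Sum>g | fa g + fb g \<noteq> 0. fa g + fb g)" using ab by simp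
    qed
  qed auto
qed

lemma graded_submodule_cyclic:
  assumes gm: "graded_module RG MG scale" and m: "m \<in> MG h"
  shows "graded_submodule MG scale (range (\<lambda>s. scale s m))"
  unfolding graded_submodule_def
proof
  have ms: "module scale" and du: "is_direct_sum UNIV MG"
    and dR: "is_direct_sum UNIV RG" and mul: "\<forall>g h. \<forall>a\<in>RG g. \<forall>m\<in>MG h. scale a m \<in> MG (g + h)"
    using gm unfolding graded_module_def graded_ring_def by auto
  interpret module scale by fact
  show "subspace (range (\<lambda>s. scale s m))" by (metis span_singleton subspace_span)
  show "is_direct_sum (range (\<lambda>s. scale s m)) (\<lambda>g. range (\<lambda>s. scale s m) \<inter> MG g)"
  proof (rule is_direct_sum_subfamily[OF du])
    fix x assume "x \<in> range (\<lambda>s. scale s m)"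
    then obtain s where xs: "x = scale s m" by auto
    obtain sf where sf: "finite {g. sf g \<noteq> 0}" "\<forall>g. sf g \<in> RG g" "s = (\<Sum>g | sf g \<noteq> 0. sf g)"
      using dR unfolding is_direct_sum_def by blast
    define S where "S = {g. sf g \<noteq> 0}"
    \<comment> \<open>the degree-g component of s m is s_(g-h) m\<close>
    define f where "f = (\<lambda>g. scale (sf (g - h)) m)"
    have S: "finite ((\<lambda>g. g + h) ` S)" using sf(1) S_def by auto
    have supp: "{g. f g \<noteq> 0} \<subseteq> (\<lambda>g. g + h) ` S"
      unfolding f_def S_def by (auto intro: image_eqI[of _ _ "_ - h"])
    show "\<exists>f. finite {g. f g \<noteq> 0} \<and> (\<forall>g. f g \<in> range (\<lambda>s. scale s m) \<inter> MG g) \<and> x = (\<Sum>g | f g \<noteq> 0. f g)"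
    proof (intro exI conjI allI)
      show "finite {g. f g \<noteq> 0}" using S supp finite_subset by blast
      show "f g \<in> range (\<lambda>s. scale s m) \<inter> MG g" for g
        using mul sf(2) m unfolding f_def by (metis IntI diff_add_cancel rangeI)
      have "(\<Sum>g | f g \<noteq> 0. f g) = (\<Sum>g\<in>S. f (g + h))"
        by (simp add: sum_nonzero_eq_sum_superset[OF S supp] sum.reindex inj_on_def)
      also have "\<dots> = scale (sum sf S) m" by (simp add: f_def scale_sum_left)
      finally show "x = (\<Sum>g | f g \<noteq> 0. f g)" using xs sf(3) S_def by simp
    qed
  qed auto
qed

lemma diff_scale_power_mem:
  assumes "module scale" and N: "module.subspace scale N" and s: "m - scale s m \<in> N"
  shows "m - scale (s ^ k) m \<in> N"
proof -
  interpret module scale by fact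
  show ?thesis
  proof (induction k)
    case 0
    show ?case using subspace_0[OF N] by simp
  next
    case (Suc k)
    have "m - scale (s ^ Suc k) m = (m - scale (s ^ k) m) + scale (s ^ k) (m - scale s m)"
      by (simp add: algebra_simps)
    also have "\<dots> \<in> N" using Suc s subspace_add[OF N] subspace_scale[OF N] by blast
    finally show ?case .
  qed
qed

lemma gr_maximal_set_plus_cyclic:
  assumes gm: "graded_module RG MG scale" and N: "gr_maximal MG scale N"
    and x: "x \<in> MG h" "x \<notin> N"
  shows "set_plus N (range (\<lambda>s. scale s x)) = UNIV"
proof -
  interpret module scale using gm unfolding graded_module_def by blast
  define L where "L = set_plus N (range (\<lambda>s. scale s x))"
  have "graded_submodule MG scale L"
    unfolding L_def using N graded_submodule_set_plus[OF gm _ graded_submodule_cyclic[OF gm x(1)]]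
    unfolding gr_maximal_def by blast
  moreover have "N \<subseteq> L" unfolding L_def by (rule subset_set_plus_left) (metis rangeI scale_zero_left)
  moreover have "x \<in> L"
  proof -
    have "0 \<in> N" using N subspace_0 unfolding gr_maximal_def graded_submodule_def by blast
    then have "0 + scale 1 x \<in> L" unfolding L_def by (intro set_plusI rangeI)
    then show ?thesis by simp
  qed
  ultimately show ?thesis using N x(2) unfolding L_def gr_maximal_def by blast
qed

text \<open>Graded Nakayama argument: if r m were outside a Gr-maximal N, then m = a + s r m with
  a \<in> N, so m - (s r)^n m \<in> N; but (s r)^n m = 0, whence m \<in> N.\<close>
lemma scale_mem_Jgr_if_power_annihilates:
  assumes gm: "graded_module RG MG scale" and r: "r \<in> homog RG" and m: "m \<in> homog MG"
    and z: "scale (r ^ n) m = 0"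
  shows "scale r m \<in> Jgr MG scale"
  unfolding Jgr_def
proof
  fix N assume "N \<in> {N. gr_maximal MG scale N}"
  then have N: "gr_maximal MG scale N" by simp
  have ms: "module scale" and mul: "\<forall>g h. \<forall>a\<in>RG g. \<forall>m\<in>MG h. scale a m \<in> MG (g + h)"
    using gm unfolding graded_module_def by auto
  interpret module scale by fact
  have sN: "subspace N" using N unfolding gr_maximal_def graded_submodule_def by auto
  show "scale r m \<in> N"
  proof (rule ccontr)
    assume nin: "scale r m \<notin> N"
    obtain g h where "r \<in> RG g" "m \<in> MG h" using r m unfolding homog_def by auto
    then have "scale r m \<in> MG (g + h)" using mul by blast
    from gr_maximal_set_plus_cyclic[OF gm N this nin]
    obtain a s where "a \<in> N" "m = a + scale s (scale r m)"
      unfolding set_plus_def by blast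
    then have "m - scale (s * r) m = a" by (metis add_diff_cancel scale_scale)
    with \<open>a \<in> N\<close> have "m - scale (s * r) m \<in> N" by simp
    then have "m - scale ((s * r) ^ n) m \<in> N" by (rule diff_scale_power_mem[OF ms sN])
    moreover have "scale ((s * r) ^ n) m = 0"
      using z by (simp add: power_mult_distrib flip: scale_scale)
    ultimately have "m \<in> N" by simp
    then show False using nin subspace_scale[OF sN] by blast
  qed
qed

lemma subspace_Jgr: "module scale \<Longrightarrow> module.subspace scale (Jgr MG scale)"
  unfolding Jgr_def
  by (rule module.subspace_Inter) (auto simp: gr_maximal_def graded_submodule_def)

lemma graded_weakly_Jgr_semiprime_scale_image:
  assumes gm: "graded_module RG MG scale" and U: "graded_weakly_Jgr_semiprime RG MG scale U"
    and K: "graded_submodule MG scale K" and r: "r \<in> homog RG" and n: "n > 0"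
    and sub: "scale (r ^ n) ` K \<subseteq> U"
  shows "scale r ` K \<subseteq> set_plus U (Jgr MG scale)"
proof clarify
  have ms: "module scale" using gm unfolding graded_module_def by blast
  interpret module scale by fact
  have sU: "subspace U" using U unfolding graded_weakly_Jgr_semiprime_def graded_submodule_def by blast
  have sUJ: "subspace (set_plus U (Jgr MG scale))"
    by (rule subspace_set_plus[OF ms sU subspace_Jgr[OF ms]])
  fix k assume "k \<in> K"
  then obtain f where f: "\<forall>g. f g \<in> K \<inter> MG g" "k = (\<Sum>g | f g \<noteq> 0. f g)"
    using K unfolding graded_submodule_def is_direct_sum_def by blast
  have "scale r (f g) \<in> set_plus U (Jgr MG scale)" for g
  proof (cases "scale (r ^ n) (f g) = 0")
    case True
    have "f g \<in> homog MG" using f(1) unfolding homog_def by blast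
    then have "scale r (f g) \<in> Jgr MG scale"
      using scale_mem_Jgr_if_power_annihilates[OF gm r _ True] by blast
    then show ?thesis using subset_set_plus_right[OF subspace_0[OF sU]] by blast
  next
    case False
    have "f g \<in> homog MG" using f(1) unfolding homog_def by blast
    moreover have "scale (r ^ n) (f g) \<in> U" using sub f(1) by blast
    ultimately show ?thesis
      using U r n False unfolding graded_weakly_Jgr_semiprime_def by blast
  qed
  then have "(\<Sum>g | f g \<noteq> 0. scale r (f g)) \<in> set_plus U (Jgr MG scale)"
    by (rule subspace_sum[OF sUJ])
  then show "scale r k \<in> set_plus U (Jgr MG scale)" using f(2) by (simp add: scale_sum_right)
qed

lemma graded_weakly_Jgr_semiprimeI:
  assumes gm: "graded_module RG MG scale" and U: "graded_submodule MG scale U" "U \<noteq> UNIV"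
    and image_cond: "\<And>K r n. graded_submodule MG scale K \<Longrightarrow> r \<in> homog RG \<Longrightarrow> n > 0 \<Longrightarrow>
      scale (r ^ n) ` K \<noteq> {0} \<Longrightarrow> scale (r ^ n) ` K \<subseteq> U \<Longrightarrow>
      scale r ` K \<subseteq> set_plus U (Jgr MG scale)"
  shows "graded_weakly_Jgr_semiprime RG MG scale U"
  unfolding graded_weakly_Jgr_semiprime_def
proof (intro conjI ballI allI impI U)
  interpret module scale using gm unfolding graded_module_def by blast
  fix r m and n :: nat
  assume r: "r \<in> homog RG" and m: "m \<in> homog MG" and n: "n > 0"
    and nz: "scale (r ^ n) m \<noteq> 0" and inU: "scale (r ^ n) m \<in> U"
  obtain h where "m \<in> MG h" using m unfolding homog_def by blast
  define K where "K = range (\<lambda>s. scale s m)"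
  have K: "graded_submodule MG scale K"
    unfolding K_def by (rule graded_submodule_cyclic[OF gm \<open>m \<in> MG h\<close>])
  have mK: "m \<in> K" unfolding K_def by (metis rangeI scale_one)
  have "scale (r ^ n) ` K \<subseteq> U"
  proof
    fix y assume "y \<in> scale (r ^ n) ` K"
    then obtain s where "y = scale (r ^ n) (scale s m)" unfolding K_def by blast
    then have "y = scale s (scale (r ^ n) m)" by (simp only: scale_left_commute)
    then show "y \<in> U" using U(1) inU subspace_scale unfolding graded_submodule_def by blast
  qed
  moreover have "scale (r ^ n) ` K \<noteq> {0}" using mK nz by blast
  ultimately show "scale r m \<in> set_plus U (Jgr MG scale)" using image_cond[OF K r n] mK by blast
qed

theorem theorem2p4:
  fixes RG :: "'g::group_add \<Rightarrow> 'r::comm_ring_1 set"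
    and MG :: "'g \<Rightarrow> 'm::ab_group_add set"
    and scale :: "'r \<Rightarrow> 'm \<Rightarrow> 'm"
    and U :: "'m set"
  assumes "graded_module RG MG scale"
    and "graded_submodule MG scale U"
    and "U \<noteq> UNIV"
  shows "graded_weakly_Jgr_semiprime RG MG scale U \<longleftrightarrow>
    (\<forall>K. graded_submodule MG scale K \<longrightarrow>
      (\<forall>r\<in>homog RG. \<forall>n::nat. n > 0 \<longrightarrow>
         ideal_smult scale (ideal_pow (pideal r) n) K \<noteq> {0} \<longrightarrow>
         ideal_smult scale (ideal_pow (pideal r) n) K \<subseteq> U \<longrightarrow>
         ideal_smult scale (pideal r) K \<subseteq> set_plus U (Jgr MG scale)))"
    (is "_ \<longleftrightarrow> ?rhs")
proof -
  have ms: "module scale" using assms(1) unfolding graded_module_def by blast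
  have images: "ideal_smult scale (ideal_pow (pideal r) n) K = scale (r ^ n) ` K"
    "ideal_smult scale (pideal r) K = scale r ` K" if "graded_submodule MG scale K" for K r n
    using ideal_smult_pideal[OF ms] that unfolding ideal_pow_pideal graded_submodule_def by blast+
  show ?thesis
  proof
    show "graded_weakly_Jgr_semiprime RG MG scale U \<Longrightarrow> ?rhs"
      using graded_weakly_Jgr_semiprime_scale_image[OF assms(1)] by (simp add: images)
  qed (rule graded_weakly_Jgr_semiprimeI[OF assms], simp_all add: images)
qed

end
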